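(* Let $V$ be a finite nonempty set of voters, $A$ a finite set of alternatives, and $F:\mathcal{P}(V,A)\to S_2(A)$ an irreducible, weakly viable consular election rule satisfying SPP and SPO. Let $R\subseteq S_2(A)$ be the range of $F$ and let $D=\{\alpha(L)|_R : L \text{ a linear order on } A\}$. Then $D$ is a linked domain of linear orders over the set $R$.
   Context: A profile assigns to each voter $i\in V$ a linear order $P_i$ on $A$; $P_i'P_{-i}$ replaces voter $i$'s order by $P_i'$; $P|_B$ denotes restriction to $B\subseteq A$. $S_2(A)$ is the set of 2-element subsets of $A$; a consular election rule is a map $F:\mathcal{P}(V,A)\to S_2(A)$. $\mathrm{best}(P_i,W)$, $\mathrm{worst}(P_i,W)$ denote the $P_i$-best and $P_i$-worst elements of nonempty $W\subseteq A$. SPO: for all $P$, $i$, $P_i'$, $\mathrm{best}(P_i,F(P))\succeq_i\mathrm{best}(P_i,F(P_i'P_{-i}))$; SPP: same with $\mathrm{worst}$. Weakly viable: every $a\in A$ lies in $F(P)$ for some $P$. Reducible: there is a partition $A=B\uplus C$ and social choice functions $G:\mathcal{P}(V,B)\to B$, $H:\mathcal{P}(V,C)\to C$ with $F(P)=\{G(P|_B),H(P|_C)\}$ for all $P$; irreducible means not reducible. For a linear order $L$ on $A$, $\alpha(L)$ is the linear order on $S_2(A)$ given by: $X$ is above $Y$ iff $\mathrm{best}(L,X)$ is above $\mathrm{best}(L,Y)$ in $L$, or $\mathrm{best}(L,X)=\mathrm{best}(L,Y)$ and $\mathrm{worst}(L,X)$ is above $\mathrm{worst}(L,Y)$; $\alpha(L)|_R$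 is its restriction to $R$. Given a domain $D$ of linear orders over a finite set $R$, two elements $x,y\in R$ are connected in $D$ if there are orders in $D$ ranking $x$ first and $y$ second, and $y$ first and $x$ second, respectively. $D$ is linked if $R$ can be enumerated as $x_1,\dots,x_q$ such that $x_1$ is connected to $x_2$ and for every $j\ge 3$, $x_j$ is connected to at least two elements of $\{x_1,\dots,x_{j-1}\}$. *)

theory Defs
  imports Main
begin

text \<open>A linear order on A is a relation L with linear_order_on A L;
  (x,y) \<in> L means x is ranked weakly above y.  Profiles are extensional:
  voters outside V get the empty relation.\<close>

definition profiles :: "'v set \<Rightarrow> 'a set \<Rightarrow> ('v \<Rightarrow> 'a rel) set" where
  "profiles V A = {P. (\<forall>i\<in>V. linear_order_on A (P i)) \<and> (\<forall>i. i \<notin> V \<longrightarrow> P i = {})}"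

definition restrict_profile :: "('v \<Rightarrow> 'a rel) \<Rightarrow> 'a set \<Rightarrow> ('v \<Rightarrow> 'a rel)" where
  "restrict_profile P B = (\<lambda>i. P i \<inter> (B \<times> B))"

definition S2 :: "'a set \<Rightarrow> 'a set set" where
  "S2 A = {X. X \<subseteq> A \<and> card X = 2}"

definition best :: "'a rel \<Rightarrow> 'a set \<Rightarrow> 'a" where
  "best L W = (THE x. x \<in> W \<and> (\<forall>y\<in>W. (x, y) \<in> L))"

definition worst :: "'a rel \<Rightarrow> 'a set \<Rightarrow> 'a" where
  "worst L W = (THE x. x \<in> W \<and> (\<forall>y\<in>W. (y, x) \<in> L))"

definition consular_rule :: "'v set \<Rightarrow> 'a set \<Rightarrow> (('v \<Rightarrow> 'a rel) \<Rightarrow> 'a set) \<Rightarrow> bool" where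
  "consular_rule V A F \<longleftrightarrow> (\<forall>P\<in>profiles V A. F P \<in> S2 A)"

definition social_choice_function :: "'v set \<Rightarrow> 'a set \<Rightarrow> (('v \<Rightarrow> 'a rel) \<Rightarrow> 'a) \<Rightarrow> bool" where
  "social_choice_function V B G \<longleftrightarrow> (\<forall>P\<in>profiles V B. G P \<in> B)"

definition SPO :: "'v set \<Rightarrow> 'a set \<Rightarrow> (('v \<Rightarrow> 'a rel) \<Rightarrow> 'a set) \<Rightarrow> bool" where
  "SPO V A F \<longleftrightarrow> (\<forall>P\<in>profiles V A. \<forall>i\<in>V. \<forall>L'. linear_order_on A L' \<longrightarrow>
      (best (P i) (F P), best (P i) (F (P(i := L')))) \<in> P i)"

definition SPP :: "'v set \<Rightarrow> 'a set \<Rightarrow> (('v \<Rightarrow> 'a rel) \<Rightarrow> 'a set) \<Rightarrow> bool" where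
  "SPP V A F \<longleftrightarrow> (\<forall>P\<in>profiles V A. \<forall>i\<in>V. \<forall>L'. linear_order_on A L' \<longrightarrow>
      (worst (P i) (F P), worst (P i) (F (P(i := L')))) \<in> P i)"

definition weakly_viable :: "'v set \<Rightarrow> 'a set \<Rightarrow> (('v \<Rightarrow> 'a rel) \<Rightarrow> 'a set) \<Rightarrow> bool" where
  "weakly_viable V A F \<longleftrightarrow> (\<forall>a\<in>A. \<exists>P\<in>profiles V A. a \<in> F P)"

definition reducible :: "'v set \<Rightarrow> 'a set \<Rightarrow> (('v \<Rightarrow> 'a rel) \<Rightarrow> 'a set) \<Rightarrow> bool" where
  "reducible V A F \<longleftrightarrow> (\<exists>B C G H. B \<union> C = A \<and> B \<inter> C = {} \<and> B \<noteq> {} \<and> C \<noteq> {} \<and>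
      social_choice_function V B G \<and> social_choice_function V C H \<and>
      (\<forall>P\<in>profiles V A. F P = {G (restrict_profile P B), H (restrict_profile P C)}))"

definition irreducible :: "'v set \<Rightarrow> 'a set \<Rightarrow> (('v \<Rightarrow> 'a rel) \<Rightarrow> 'a set) \<Rightarrow> bool" where
  "irreducible V A F \<longleftrightarrow> \<not> reducible V A F"

definition alpha :: "'a set \<Rightarrow> 'a rel \<Rightarrow> 'a set rel" where
  "alpha A L = {(X, Y). X \<in> S2 A \<and> Y \<in> S2 A \<and>
      ((best L X \<noteq> best L Y \<and> (best L X, best L Y) \<in> L) \<or>
       (best L X = best L Y \<and> (worst L X, worst L Y) \<in> L))}"

definition ranks_first :: "'b set \<Rightarrow> 'b rel \<Rightarrow> 'b \<Rightarrow> bool" where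
  "ranks_first R M x \<longleftrightarrow> x \<in> R \<and> (\<forall>z\<in>R. (x, z) \<in> M)"

definition ranks_second :: "'b set \<Rightarrow> 'b rel \<Rightarrow> 'b \<Rightarrow> 'b \<Rightarrow> bool" where
  "ranks_second R M x y \<longleftrightarrow> ranks_first R M x \<and> y \<in> R \<and> y \<noteq> x \<and> (\<forall>z\<in>R - {x}. (y, z) \<in> M)"

definition connected_in :: "'b set \<Rightarrow> 'b rel set \<Rightarrow> 'b \<Rightarrow> 'b \<Rightarrow> bool" where
  "connected_in R D x y \<longleftrightarrow> (\<exists>M\<in>D. ranks_second R M x y) \<and> (\<exists>M\<in>D. ranks_second R M y x)"

definition linked :: "'b set \<Rightarrow> 'b rel set \<Rightarrow> bool" where
  "linked R D \<longleftrightarrow> (\<exists>xs. distinct xs \<and> set xs = R \<and>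
      (2 \<le> length xs \<longrightarrow> connected_in R D (xs ! 0) (xs ! 1)) \<and>
      (\<forall>j. 2 \<le> j \<and> j < length xs \<longrightarrow>
          2 \<le> card {k. k < j \<and> connected_in R D (xs ! j) (xs ! k)}))"

end

theory Submission
  imports Defs
begin

text \<open>By SPO and SPP, the outcome obtained when a voter (or every voter) reports L beats, in its
  L-best and in its L-worst element, every outcome the voter could obtain by another report.
  Ranking t, y1, y2 on top shows that such a dominated family of pairs is closed under attaching:
  if {y1, y2} and some pair containing t belong to it, so does {t, y1} or {t, y2}. Applied to a
  single voter's options this shows that if the range crossed a partition B | C of the
  alternatives, the B-element of the outcome would depend only on the profile restricted to B, and
  likewise for C; so irreducibility forces a triangle {a, x}, {x, y}, {a, y} into the range.
  Two pairs sharing an alternative p are connected (rank p, q, s on top), and by the attaching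
  property each pair meeting the triangle, and then each remaining pair, shares an alternative
  with two pairs listed before it.\<close>

lemma linear_order_onD:
  assumes "linear_order_on A L"
  shows "x \<in> A \<Longrightarrow> (x, x) \<in> L"
    and "(x, y) \<in> L \<Longrightarrow> (y, z) \<in> L \<Longrightarrow> (x, z) \<in> L"
    and "(x, y) \<in> L \<Longrightarrow> (y, x) \<in> L \<Longrightarrow> x = y"
    and "x \<in> A \<Longrightarrow> y \<in> A \<Longrightarrow> x \<noteq> y \<Longrightarrow> (x, y) \<in> L \<or> (y, x) \<in> L"
  using assms
  unfolding linear_order_on_def partial_order_on_def preorder_on_def
  by (auto simp: refl_on_def total_on_def dest: transD antisymD)

lemma doubleton_in_S2_iff [simp]: "{x, y} \<in> S2 A \<longleftrightarrow> x \<noteq> y \<and> x \<in> A \<and> y \<in> A"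
  unfolding S2_def by (cases "x = y") auto

lemma singleton_notin_S2 [simp]: "{x} \<notin> S2 A"
  unfolding S2_def by simp

lemma finite_S2: "finite A \<Longrightarrow> finite (S2 A)"
  by (rule finite_subset[of _ "Pow A"]) (auto simp: S2_def)

lemma S2_obtain:
  assumes "X \<in> S2 A"
  obtains u v where "X = {u, v}" "u \<noteq> v" "u \<in> A" "v \<in> A"
  using assms unfolding S2_def by (auto simp: card_2_iff)

lemma best_worst_doubleton:
  assumes L: "linear_order_on A L" and "u \<noteq> v" "(u, v) \<in> L" "u \<in> A" "v \<in> A"
  shows "best L {u, v} = u" and "worst L {u, v} = v"
proof -
  have "(v, u) \<notin> L" using linear_order_onD(3)[OF L] assms(2,3) by blast
  with assms show "best L {u, v} = u" "worst L {u, v} = v"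
    unfolding best_def worst_def by (auto intro!: the_equality linear_order_onD(1)[OF L])
qed

lemma S2_obtain_oriented:
  assumes L: "linear_order_on A L" and "X \<in> S2 A"
  obtains u v where "X = {u, v}" "u \<noteq> v" "u \<in> A" "v \<in> A" "(u, v) \<in> L"
    "best L X = u" "worst L X = v"
proof -
  obtain u v where X: "X = {u, v}" "u \<noteq> v" "u \<in> A" "v \<in> A"
    using assms(2) by (rule S2_obtain)
  show thesis
  proof (cases "(u, v) \<in> L")
    case True
    then show thesis using that X best_worst_doubleton[OF L] by blast
  next
    case False
    then have "(v, u) \<in> L" using linear_order_onD(4)[OF L] X by blast
    then show thesis using that[of v u] X best_worst_doubleton[OF L, of v u] by (auto simp: insert_commute)
  qed
qed

lemma alpha_iff:
  "(X, Y) \<in> alpha A L \<longleftrightarrow> X \<in> S2 A \<and> Y \<in> S2 A \<and>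
     (if best L X = best L Y then (worst L X, worst L Y) \<in> L else (best L X, best L Y) \<in> L)"
  unfolding alpha_def by auto

lemma linear_order_on_alpha:
  assumes L: "linear_order_on A L" and R: "R \<subseteq> S2 A"
  shows "linear_order_on R (alpha A L \<inter> (R \<times> R))"
proof -
  note lin = linear_order_onD[OF L]
  have oriented: "\<exists>u v. u \<in> A \<and> v \<in> A \<and> u \<noteq> v \<and> X = {u, v} \<and> best L X = u \<and> worst L X = v"
    if "X \<in> R" for X
    using S2_obtain_oriented[OF L, of X] that R by blast
  have "refl_on R (alpha A L \<inter> (R \<times> R))"
    using R oriented lin(1) by (fastforce simp: refl_on_def alpha_iff)
  moreover have "trans (alpha A L \<inter> (R \<times> R))"
  proof (rule transI)
    fix X Y Z assume "(X, Y) \<in> alpha A L \<inter> (R \<times> R)" "(Y, Z) \<in> alpha A L \<inter> (R \<times> R)"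
    then show "(X, Z) \<in> alpha A L \<inter> (R \<times> R)"
      using lin(2)[of "best L X" "best L Y" "best L Z"]
        lin(2)[of "worst L X" "worst L Y" "worst L Z"] lin(3)[of "best L X" "best L Y"]
      by (auto simp: alpha_iff split: if_splits)
  qed
  moreover have "antisym (alpha A L \<inter> (R \<times> R))"
  proof (rule antisymI)
    fix X Y assume "(X, Y) \<in> alpha A L \<inter> (R \<times> R)" "(Y, X) \<in> alpha A L \<inter> (R \<times> R)"
    moreover from this oriented obtain u v u' v' where
      "X = {u, v}" "best L X = u" "worst L X = v" "Y = {u', v'}" "best L Y = u'" "worst L Y = v'"
      by (metis IntD2 mem_Sigma_iff)
    ultimately show "X = Y" using lin(3) by (auto simp: alpha_iff split: if_splits)
  qed
  moreover have "total_on R (alpha A L \<inter> (R \<times> R))"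
  proof (rule total_onI)
    fix X Y assume XY: "X \<in> R" "Y \<in> R" "X \<noteq> Y"
    with oriented obtain u v u' v' where X: "u \<in> A" "v \<in> A" "X = {u, v}" "best L X = u" "worst L X = v"
      and Y: "u' \<in> A" "v' \<in> A" "Y = {u', v'}" "best L Y = u'" "worst L Y = v'"
      by metis
    have "(X, Y) \<in> alpha A L \<or> (Y, X) \<in> alpha A L"
    proof (cases "u = u'")
      case True
      with XY X Y have "v \<noteq> v'" by auto
      with lin(4) X Y True XY R show ?thesis by (auto simp: alpha_iff)
    next
      case False
      with lin(4) X Y XY R show ?thesis by (auto simp: alpha_iff)
    qed
    with XY show "(X, Y) \<in> alpha A L \<inter> (R \<times> R) \<or> (Y, X) \<in> alpha A L \<inter> (R \<times> R)"
      by blast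
  qed
  ultimately show ?thesis
    unfolding linear_order_on_def partial_order_on_def preorder_on_def by blast
qed

definition rank_order :: "('a \<Rightarrow> nat) \<Rightarrow> 'a set \<Rightarrow> 'a rel" where
  "rank_order r A = {(x, y). x \<in> A \<and> y \<in> A \<and> r x \<le> r y}"

lemma rank_order_iff [simp]: "(x, y) \<in> rank_order r A \<longleftrightarrow> x \<in> A \<and> y \<in> A \<and> r x \<le> r y"
  unfolding rank_order_def by simp

lemma linear_order_on_rank_order: "inj_on r A \<Longrightarrow> linear_order_on A (rank_order r A)"
  unfolding linear_order_on_def partial_order_on_def preorder_on_def
  by (auto simp: refl_on_def trans_def antisym_def total_on_def inj_on_def)

lemma linear_order_on_exists: "finite A \<Longrightarrow> \<exists>L. linear_order_on A L"
  by (metis finite_imp_inj_to_nat_seg linear_order_on_rank_order)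

lemma rank_with_prefix:
  assumes "finite A" "t \<noteq> a" "t \<noteq> b" "a \<noteq> b"
  obtains r :: "'a \<Rightarrow> nat" where "inj_on r A" "r t = 0" "r a = 1" "r b = 2"
proof -
  obtain f :: "'a \<Rightarrow> nat" where f: "inj_on f A"
    using finite_imp_inj_to_nat_seg[OF assms(1)] by blast
  define r where "r x = (if x = t then 0 else if x = a then 1 else if x = b then 2 else f x + 3)" for x
  have "inj_on r A" using f unfolding r_def inj_on_def by auto
  moreover have "r t = 0" "r a = 1" "r b = 2" unfolding r_def using assms by auto
  ultimately show thesis by (rule that)
qed

definition dominates :: "'a rel \<Rightarrow> 'a set \<Rightarrow> 'a set set \<Rightarrow> bool" where
  "dominates L X Op \<longleftrightarrow> (\<forall>Y\<in>Op. (best L X, best L Y) \<in> L \<and> (worst L X, worst L Y) \<in> L)"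

lemma dominated_family_attach:
  assumes fin: "finite A" and Op: "Op \<subseteq> S2 A"
    and dom: "\<And>L. linear_order_on A L \<Longrightarrow> \<exists>X\<in>Op. dominates L X Op"
    and y: "{y1, y2} \<in> Op" and Z: "Z \<in> Op" "t \<in> Z" and t: "t \<notin> {y1, y2}"
  shows "{t, y1} \<in> Op \<or> {t, y2} \<in> Op"
proof -
  \<comment> \<open>Rank t, y1, y2 first: the dominating pair then beats the best element of Z, so it contains t,
    and it beats the worst element y2 of {y1, y2}, so its other element is y1 or y2.\<close>
  have y12: "y1 \<noteq> y2" "y1 \<in> A" "y2 \<in> A" using y Op by auto
  have tA: "t \<in> A" using Z Op by (auto simp: S2_def)
  obtain r :: "'a \<Rightarrow> nat" where r: "inj_on r A" "r t = 0" "r y1 = 1" "r y2 = 2"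
    using rank_with_prefix[OF fin, of t y1 y2] t y12 by auto
  define L where "L = rank_order r A"
  have L: "linear_order_on A L" unfolding L_def using r(1) by (rule linear_order_on_rank_order)
  obtain X where X: "X \<in> Op" "dominates L X Op" using dom[OF L] by blast
  obtain p q where pq: "X = {p, q}" "p \<noteq> q" "p \<in> A" "q \<in> A" "best L X = p" "worst L X = q"
    using S2_obtain_oriented[OF L, of X] X Op by blast
  obtain u v where uv: "Z = {u, v}" "(u, v) \<in> L" "best L Z = u"
    using S2_obtain_oriented[OF L, of Z] Z Op by blast
  have "(best L X, best L Z) \<in> L" using X(2) Z(1) unfolding dominates_def by blast
  then have "(p, u) \<in> L" using pq uv by simp
  moreover have "r u \<le> r t" using uv Z(2) unfolding L_def by auto
  ultimately have "r p = r t" using r(2) unfolding L_def by simp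
  then have pt: "p = t" using inj_onD[OF r(1)] pq(3) tA by blast
  have "worst L {y1, y2} = y2"
    using best_worst_doubleton[OF L, of y1 y2] y12 r unfolding L_def by simp
  moreover have "(worst L X, worst L {y1, y2}) \<in> L" using X(2) y unfolding dominates_def by blast
  ultimately have "(q, y2) \<in> L" using pq by simp
  moreover have "r q \<noteq> r t" using inj_onD[OF r(1)] pq(2,4) pt tA by blast
  ultimately have "r q = r y1 \<or> r q = r y2" using r unfolding L_def by auto
  then have "q = y1 \<or> q = y2" using inj_onD[OF r(1)] pq(4) y12 by blast
  then show ?thesis using X(1) pq(1) pt by auto
qed

lemma dominating_pair_with_common_element:
  assumes L: "linear_order_on A L" and distinct: "b \<noteq> b'" "b \<noteq> c" "b' \<noteq> c"
    and A: "b \<in> A" "b' \<in> A" "c \<in> A"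
    and best: "(best L {b, c}, best L {b', c}) \<in> L" and worst: "(worst L {b, c}, worst L {b', c}) \<in> L"
  shows "(b, b') \<in> L"
proof -
  note lin = linear_order_onD[OF L]
  have bw: "best L {x, c} = x" "worst L {x, c} = c" if "(x, c) \<in> L" "x \<in> {b, b'}" for x
    using best_worst_doubleton[OF L, of x c] that distinct A by auto
  have wb: "best L {x, c} = c" "worst L {x, c} = x" if "(c, x) \<in> L" "x \<in> {b, b'}" for x
    using best_worst_doubleton[OF L, of c x] that distinct A by (auto simp: insert_commute)
  consider "(b, c) \<in> L" "(b', c) \<in> L" | "(b, c) \<in> L" "(c, b') \<in> L"
    | "(c, b) \<in> L" "(b', c) \<in> L" | "(c, b) \<in> L" "(c, b') \<in> L"
    using lin(4) distinct A by metis
  then show ?thesis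
  proof cases
    case 1 then show ?thesis using best bw by simp
  next
    case 2 then show ?thesis using lin(2) by blast
  next
    case 3 then show ?thesis using best bw wb lin(3) distinct by simp
  next
    case 4 then show ?thesis using worst wb by simp
  qed
qed

definition crossing :: "'a set \<Rightarrow> 'a set \<Rightarrow> 'a set set \<Rightarrow> bool" where
  "crossing B C R \<longleftrightarrow> (\<forall>X\<in>R. \<exists>b c. X = {b, c} \<and> b \<in> B \<and> c \<in> C)"

lemma crossingE:
  assumes "crossing B C R" "X \<in> R"
  obtains b c where "X = {b, c}" "b \<in> B" "c \<in> C"
  using assms unfolding crossing_def by blast

lemma crossing_commute: "crossing B C R \<Longrightarrow> crossing C B R"
  unfolding crossing_def by (metis insert_commute)

lemma crossing_mono: "crossing B C R \<Longrightarrow> R' \<subseteq> R \<Longrightarrow> crossing B C R'"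
  unfolding crossing_def by blast

lemma crossing_no_pair_within:
  assumes "crossing B C R" "B \<inter> C = {}" "x \<in> B" "y \<in> B"
  shows "{x, y} \<notin> R"
proof
  assume "{x, y} \<in> R"
  then obtain b c where "{x, y} = {b, c}" "c \<in> C" using assms(1) unfolding crossing_def by blast
  then show False using assms(2-4) by (auto simp: doubleton_eq_iff)
qed

lemma the_elem_crossing_pair: "b \<in> B \<Longrightarrow> c \<notin> B \<Longrightarrow> the_elem ({b, c} \<inter> B) = b"
proof -
  assume "b \<in> B" "c \<notin> B"
  then have "{b, c} \<inter> B = {b}" by auto
  then show ?thesis by simp
qed

lemma dominating_crossing_pair_prefers:
  assumes fin: "finite A" and Op: "Op \<subseteq> S2 A" and BC: "B \<inter> C = {}" and cr: "crossing B C Op"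
    and dom: "\<And>L. linear_order_on A L \<Longrightarrow> \<exists>X\<in>Op. dominates L X Op"
    and L: "linear_order_on A L" and X1: "{b1, c1} \<in> Op" "dominates L {b1, c1} Op" "b1 \<in> B" "c1 \<in> C"
    and X2: "{b2, c2} \<in> Op" "b2 \<in> B" "c2 \<in> C"
  shows "(b1, b2) \<in> L"
proof (cases "b1 = b2")
  case True
  then show ?thesis using X1 Op linear_order_onD(1)[OF L] by auto
next
  case False
  have "{b2, b1} \<notin> Op" using crossing_no_pair_within[OF cr BC X2(2) X1(3)] .
  moreover have "b2 \<notin> {b1, c1}" using False X2(2) X1(4) BC by auto
  ultimately have b2c1: "{b2, c1} \<in> Op"
    using dominated_family_attach[OF fin Op dom X1(1) X2(1)] by blast
  have "b1 \<noteq> c1" "b2 \<noteq> c1" "b1 \<in> A" "b2 \<in> A" "c1 \<in> A"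
    using X1(1) b2c1 Op by auto
  moreover have "(best L {b1, c1}, best L {b2, c1}) \<in> L" "(worst L {b1, c1}, worst L {b2, c1}) \<in> L"
    using X1(2) b2c1 unfolding dominates_def by auto
  ultimately show ?thesis
    using dominating_pair_with_common_element[OF L False] by blast
qed

lemma profiles_linear: "P \<in> profiles V A \<Longrightarrow> i \<in> V \<Longrightarrow> linear_order_on A (P i)"
  unfolding profiles_def by blast

lemma profiles_fun_upd:
  "P \<in> profiles V A \<Longrightarrow> i \<in> V \<Longrightarrow> linear_order_on A L \<Longrightarrow> P(i := L) \<in> profiles V A"
  unfolding profiles_def by auto

lemma consular_rule_S2: "consular_rule V A F \<Longrightarrow> P \<in> profiles V A \<Longrightarrow> F P \<in> S2 A"
  unfolding consular_rule_def by blast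

lemma profiles_induct_voterwise:
  assumes "finite V" and P: "P \<in> profiles V A" and P': "P' \<in> profiles V A" and "\<Phi> P"
    and step: "\<And>Q i. Q \<in> profiles V A \<Longrightarrow> i \<in> V \<Longrightarrow> Q i = P i \<Longrightarrow> \<Phi> Q \<Longrightarrow> \<Phi> (Q(i := P' i))"
  shows "\<Phi> P'"
proof -
  define mix where "mix W = (\<lambda>i. if i \<in> W then P' i else P i)" for W
  have "mix W \<in> profiles V A \<and> \<Phi> (mix W)" if "W \<subseteq> V" for W
    using finite_subset[OF that \<open>finite V\<close>] that
  proof (induction W rule: finite_induct)
    case empty
    have "mix {} = P" unfolding mix_def by simp
    then show ?case using P \<open>\<Phi> P\<close> by simp
  next
    case (insert i W)
    then have "mix W \<in> profiles V A" "\<Phi> (mix W)" "i \<in> V" "mix W i = P i"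
      unfolding mix_def by auto
    moreover have "(mix W)(i := P' i) = mix (insert i W)" unfolding mix_def by (auto simp: fun_eq_iff)
    ultimately show ?case
      using step profiles_fun_upd profiles_linear[OF P'] by metis
  qed
  moreover have "mix V = P'" using P P' unfolding mix_def profiles_def by (auto simp: fun_eq_iff)
  ultimately show ?thesis by auto
qed

lemma SPO_SPP_dominates_deviations:
  assumes spo: "SPO V A F" and spp: "SPP V A F" and P: "P \<in> profiles V A" and i: "i \<in> V"
    and L: "linear_order_on A L"
  shows "dominates L (F (P(i := L))) {F (P(i := L')) | L'. linear_order_on A L'}"
  unfolding dominates_def
proof clarify
  fix L' assume "linear_order_on A L'"
  moreover have "P(i := L) \<in> profiles V A" using profiles_fun_upd[OF P i L] .
  ultimately show "(best L (F (P(i := L))), best L (F (P(i := L')))) \<in> L \<and>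
      (worst L (F (P(i := L))), worst L (F (P(i := L')))) \<in> L"
    using spo spp i unfolding SPO_def SPP_def by (metis fun_upd_same fun_upd_upd)
qed

definition unanimous :: "'v set \<Rightarrow> 'a rel \<Rightarrow> 'v \<Rightarrow> 'a rel" where
  "unanimous V L = (\<lambda>i. if i \<in> V then L else {})"

lemma unanimous_in_profiles: "linear_order_on A L \<Longrightarrow> unanimous V L \<in> profiles V A"
  unfolding unanimous_def profiles_def by auto

lemma SPO_SPP_unanimous_dominates:
  assumes "finite V" and cons: "consular_rule V A F" and spo: "SPO V A F" and spp: "SPP V A F"
    and L: "linear_order_on A L"
  shows "dominates L (F (unanimous V L)) (F ` profiles V A)"
  unfolding dominates_def
proof clarify
  fix P assume P: "P \<in> profiles V A"
  note lin = linear_order_onD[OF L]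
  \<comment> \<open>Switch the voters to L one at a time; by SPO and SPP no switch improves on the outcome for L.\<close>
  show "(best L (F (unanimous V L)), best L (F P)) \<in> L \<and> (worst L (F (unanimous V L)), worst L (F P)) \<in> L"
  proof (rule profiles_induct_voterwise[OF \<open>finite V\<close> P unanimous_in_profiles[OF L]])
    obtain u v where "F P = {u, v}" "u \<in> A" "v \<in> A" "best L (F P) = u" "worst L (F P) = v"
      using S2_obtain_oriented[OF L consular_rule_S2[OF cons P]] by metis
    then show "(best L (F P), best L (F P)) \<in> L \<and> (worst L (F P), worst L (F P)) \<in> L"
      using lin(1) by simp
  next
    fix Q i assume Q: "Q \<in> profiles V A" "i \<in> V"
      and IH: "(best L (F Q), best L (F P)) \<in> L \<and> (worst L (F Q), worst L (F P)) \<in> L"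
    have "unanimous V L i = L" using Q(2) unfolding unanimous_def by simp
    then have "(best L (F (Q(i := L))), best L (F Q)) \<in> L \<and> (worst L (F (Q(i := L))), worst L (F Q)) \<in> L"
      using SPO_SPP_dominates_deviations[OF spo spp Q L] profiles_linear[OF Q]
      unfolding dominates_def by (metis (mono_tags, lifting) fun_upd_triv mem_Collect_eq)
    then show "(best L (F (Q(i := unanimous V L i))), best L (F P)) \<in> L \<and>
        (worst L (F (Q(i := unanimous V L i))), worst L (F P)) \<in> L"
      using IH lin(2) \<open>unanimous V L i = L\<close> by metis
  qed
qed

lemma crossing_deviation_invariant:
  assumes fin: "finite A" and cons: "consular_rule V A F" and spo: "SPO V A F" and spp: "SPP V A F"
    and BC: "B \<inter> C = {}" and cr: "crossing B C (F ` profiles V A)"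
    and P: "P \<in> profiles V A" and i: "i \<in> V"
    and L1: "linear_order_on A L1" and L2: "linear_order_on A L2"
    and agree: "L1 \<inter> (B \<times> B) = L2 \<inter> (B \<times> B)"
  shows "the_elem (F (P(i := L1)) \<inter> B) = the_elem (F (P(i := L2)) \<inter> B)"
proof -
  define Op where "Op = {F (P(i := L)) | L. linear_order_on A L}"
  have "Op \<subseteq> F ` profiles V A" unfolding Op_def using profiles_fun_upd[OF P i] by blast
  then have Op: "Op \<subseteq> S2 A" and crOp: "crossing B C Op"
    using consular_rule_S2[OF cons] crossing_mono[OF cr] by auto
  have dom: "\<exists>X\<in>Op. dominates L X Op" if "linear_order_on A L" for L
    using SPO_SPP_dominates_deviations[OF spo spp P i that] that unfolding Op_def by blast
  have "F (P(i := L1)) \<in> Op" "F (P(i := L2)) \<in> Op" unfolding Op_def using L1 L2 by blast+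
  obtain b1 c1 where X1: "F (P(i := L1)) = {b1, c1}" "b1 \<in> B" "c1 \<in> C"
    by (rule crossingE[OF crOp \<open>F (P(i := L1)) \<in> Op\<close>])
  obtain b2 c2 where X2: "F (P(i := L2)) = {b2, c2}" "b2 \<in> B" "c2 \<in> C"
    by (rule crossingE[OF crOp \<open>F (P(i := L2)) \<in> Op\<close>])
  \<comment> \<open>Each report makes its own B-element preferred to the other's; both reports rank B alike.\<close>
  have "(b1, b2) \<in> L1"
    using dominating_crossing_pair_prefers[OF fin Op BC crOp dom L1, of b1 c1 b2 c2] X1 X2
      \<open>F (P(i := L1)) \<in> Op\<close> \<open>F (P(i := L2)) \<in> Op\<close>
      SPO_SPP_dominates_deviations[OF spo spp P i L1] unfolding Op_def by auto
  moreover have "(b2, b1) \<in> L2"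
    using dominating_crossing_pair_prefers[OF fin Op BC crOp dom L2, of b2 c2 b1 c1] X1 X2
      \<open>F (P(i := L1)) \<in> Op\<close> \<open>F (P(i := L2)) \<in> Op\<close>
      SPO_SPP_dominates_deviations[OF spo spp P i L2] unfolding Op_def by auto
  then have "(b2, b1) \<in> L1" using agree X1(2) X2(2) by blast
  ultimately have "b1 = b2" using linear_order_onD(3)[OF L1] by blast
  moreover have "c1 \<notin> B" "c2 \<notin> B" using X1(3) X2(3) BC by auto
  ultimately show ?thesis using X1 X2 the_elem_crossing_pair by metis
qed

lemma crossing_independent:
  assumes "finite V" and fin: "finite A" and cons: "consular_rule V A F"
    and spo: "SPO V A F" and spp: "SPP V A F"
    and BC: "B \<inter> C = {}" and cr: "crossing B C (F ` profiles V A)"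
    and P: "P \<in> profiles V A" and P': "P' \<in> profiles V A"
    and agree: "restrict_profile P B = restrict_profile P' B"
  shows "the_elem (F P \<inter> B) = the_elem (F P' \<inter> B)"
proof (rule profiles_induct_voterwise[OF \<open>finite V\<close> P P'])
  fix Q i assume Q: "Q \<in> profiles V A" "i \<in> V" "Q i = P i"
    and IH: "the_elem (F P \<inter> B) = the_elem (F Q \<inter> B)"
  have "P i \<inter> (B \<times> B) = P' i \<inter> (B \<times> B)"
    using agree unfolding restrict_profile_def by metis
  then have "the_elem (F (Q(i := P i)) \<inter> B) = the_elem (F (Q(i := P' i)) \<inter> B)"
    using crossing_deviation_invariant[OF fin cons spo spp BC cr Q(1,2)]
      profiles_linear[OF P Q(2)] profiles_linear[OF P' Q(2)] by blast
  then show "the_elem (F P \<inter> B) = the_elem (F (Q(i := P' i)) \<inter> B)"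
    using IH Q(3) by (metis fun_upd_triv)
qed simp

lemma factor_through:
  assumes f: "\<And>x y. x \<in> S \<Longrightarrow> y \<in> S \<Longrightarrow> g x = g y \<Longrightarrow> f x = f y"
    and fT: "f ` S \<subseteq> T" and T: "T \<noteq> {}"
  obtains h where "\<And>x. x \<in> S \<Longrightarrow> f x = h (g x)" and "\<And>y. h y \<in> T"
proof -
  define h where "h y = (if \<exists>x\<in>S. g x = y then f (SOME x. x \<in> S \<and> g x = y) else (SOME t. t \<in> T))" for y
  have pick: "(SOME x'. x' \<in> S \<and> g x' = g x) \<in> S \<and> g (SOME x'. x' \<in> S \<and> g x' = g x) = g x"
    if "x \<in> S" for x
    using someI[of "\<lambda>x'. x' \<in> S \<and> g x' = g x" x] that by blast
  have "h (g x) = f x" if "x \<in> S" for x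
  proof -
    have "h (g x) = f (SOME x'. x' \<in> S \<and> g x' = g x)" unfolding h_def using that by auto
    also have "\<dots> = f x" using f pick[OF that] that by blast
    finally show ?thesis .
  qed
  moreover have "h y \<in> T" for y
  proof (cases "\<exists>x\<in>S. g x = y")
    case True
    then have "(SOME x. x \<in> S \<and> g x = y) \<in> S" by (metis (mono_tags, lifting) someI)
    then show ?thesis using True fT unfolding h_def by auto
  next
    case False
    then show ?thesis using T unfolding h_def by (simp add: some_in_eq)
  qed
  ultimately show thesis using that by metis
qed

lemma crossing_range_reducible:
  assumes "finite V" and fin: "finite A" and cons: "consular_rule V A F"
    and spo: "SPO V A F" and spp: "SPP V A F"
    and BC: "B \<union> C = A" "B \<inter> C = {}" "B \<noteq> {}" "C \<noteq> {}" and cr: "crossing B C (F ` profiles V A)"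
  shows "reducible V A F"
proof -
  have split: "F P = {the_elem (F P \<inter> B), the_elem (F P \<inter> C)}"
    "the_elem (F P \<inter> B) \<in> B" "the_elem (F P \<inter> C) \<in> C" if P: "P \<in> profiles V A" for P
  proof -
    obtain b c where bc: "F P = {b, c}" "b \<in> B" "c \<in> C"
      by (rule crossingE[OF cr imageI[OF P]])
    moreover have "c \<notin> B" "b \<notin> C" using bc BC(2) by auto
    ultimately have "the_elem (F P \<inter> B) = b" "the_elem (F P \<inter> C) = c"
      unfolding bc(1) using the_elem_crossing_pair[of b B c] the_elem_crossing_pair[of c C b]
      by (simp_all add: insert_commute)
    with bc show "F P = {the_elem (F P \<inter> B), the_elem (F P \<inter> C)}"
      "the_elem (F P \<inter> B) \<in> B" "the_elem (F P \<inter> C) \<in> C" by simp_all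
  qed
  have "C \<inter> B = {}" using BC(2) by blast
  obtain G where G: "\<And>P. P \<in> profiles V A \<Longrightarrow> the_elem (F P \<inter> B) = G (restrict_profile P B)"
    and GB: "\<And>Q. G Q \<in> B"
    by (rule factor_through[of "profiles V A" "\<lambda>P. restrict_profile P B" "\<lambda>P. the_elem (F P \<inter> B)" B,
          OF crossing_independent[OF \<open>finite V\<close> fin cons spo spp BC(2) cr] _ BC(3)])
      (use split(2) in auto)
  obtain H where H: "\<And>P. P \<in> profiles V A \<Longrightarrow> the_elem (F P \<inter> C) = H (restrict_profile P C)"
    and HC: "\<And>Q. H Q \<in> C"
    by (rule factor_through[of "profiles V A" "\<lambda>P. restrict_profile P C" "\<lambda>P. the_elem (F P \<inter> C)" C,
          OF crossing_independent[OF \<open>finite V\<close> fin cons spo spp \<open>C \<inter> B = {}\<close> crossing_commute[OF cr]]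
          _ BC(4)])
      (use split(3) in auto)
  have "F P = {G (restrict_profile P B), H (restrict_profile P C)}" if "P \<in> profiles V A" for P
    using split(1)[OF that] G[OF that] H[OF that] by argo
  moreover have "social_choice_function V B G" "social_choice_function V C H"
    unfolding social_choice_function_def using GB HC by auto
  ultimately show ?thesis
    unfolding reducible_def using BC by (intro exI[of _ B] exI[of _ C] exI[of _ G] exI[of _ H]) auto
qed

lemma range_attach:
  assumes "finite V" and fin: "finite A" and cons: "consular_rule V A F" and wv: "weakly_viable V A F"
    and spo: "SPO V A F" and spp: "SPP V A F"
    and y: "{y1, y2} \<in> F ` profiles V A" and t: "t \<in> A" "t \<notin> {y1, y2}"
  shows "{t, y1} \<in> F ` profiles V A \<or> {t, y2} \<in> F ` profiles V A"
proof -
  have R: "F ` profiles V A \<subseteq> S2 A" using consular_rule_S2[OF cons] by blast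
  have dom: "\<exists>X\<in>F ` profiles V A. dominates L X (F ` profiles V A)" if L: "linear_order_on A L" for L
    using SPO_SPP_unanimous_dominates[OF \<open>finite V\<close> cons spo spp L] unanimous_in_profiles[OF L] by blast
  obtain P where P: "P \<in> profiles V A" "t \<in> F P" using wv t(1) unfolding weakly_viable_def by blast
  show ?thesis using dominated_family_attach[OF fin R dom y imageI[OF P(1)] P(2) t(2)] .
qed

lemma triangle_free_crossing:
  assumes R: "R \<subseteq> S2 A" and a: "a \<in> A"
    and attach: "\<And>y1 y2 t. {y1, y2} \<in> R \<Longrightarrow> t \<in> A \<Longrightarrow> t \<notin> {y1, y2} \<Longrightarrow> {t, y1} \<in> R \<or> {t, y2} \<in> R"
    and no_triangle: "\<And>x y. {a, x} \<in> R \<Longrightarrow> {x, y} \<in> R \<Longrightarrow> {a, y} \<notin> R"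
  shows "crossing {x \<in> A. {a, x} \<notin> R} {x \<in> A. {a, x} \<in> R} R"
  unfolding crossing_def
proof
  fix X assume X: "X \<in> R"
  then obtain x y where xy: "X = {x, y}" "x \<in> A" "y \<in> A"
    using R by (blast elim: S2_obtain)
  have "\<not> ({a, x} \<in> R \<and> {a, y} \<in> R)" using no_triangle X xy(1) by blast
  moreover have "{a, x} \<in> R \<or> {a, y} \<in> R"
  proof (cases "a \<in> {x, y}")
    case True
    then show ?thesis using X xy(1) by (auto simp: insert_commute)
  next
    case False
    then show ?thesis using attach[of x y a] X xy(1) a by blast
  qed
  ultimately consider "{a, x} \<notin> R" "{a, y} \<in> R" | "{a, y} \<notin> R" "{a, x} \<in> R" by blast
  then show "\<exists>b c. X = {b, c} \<and> b \<in> {x \<in> A. {a, x} \<notin> R} \<and> c \<in> {x \<in> A. {a, x} \<in> R}"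
  proof cases
    case 1
    then show ?thesis using xy by blast
  next
    case 2
    then show ?thesis using xy by (blast intro: insert_commute)
  qed
qed

lemma irreducible_range_has_triangle:
  assumes "finite V" and fin: "finite A" and cons: "consular_rule V A F"
    and irr: "irreducible V A F" and wv: "weakly_viable V A F"
    and spo: "SPO V A F" and spp: "SPP V A F"
  obtains a x y where "{a, x} \<in> F ` profiles V A" "{x, y} \<in> F ` profiles V A" "{a, y} \<in> F ` profiles V A"
proof -
  define R where "R = F ` profiles V A"
  have R: "R \<subseteq> S2 A" unfolding R_def using consular_rule_S2[OF cons] by blast
  obtain L where "linear_order_on A L" using linear_order_on_exists[OF fin] by blast
  then have "F (unanimous V L) \<in> R"
    unfolding R_def using unanimous_in_profiles by blast
  moreover from this obtain a b where "F (unanimous V L) = {a, b}" "a \<in> A"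
    using R S2_obtain by (metis subsetD)
  ultimately have ab: "{a, b} \<in> R" "a \<in> A" by simp_all
  \<comment> \<open>Without a triangle through a, the range crosses the partition into the non-neighbours and
    the neighbours of a, which makes F reducible.\<close>
  have "\<exists>x y. {a, x} \<in> R \<and> {x, y} \<in> R \<and> {a, y} \<in> R"
  proof (rule ccontr)
    assume "\<nexists>x y. {a, x} \<in> R \<and> {x, y} \<in> R \<and> {a, y} \<in> R"
    then have no_triangle: "{a, y} \<notin> R" if "{a, x} \<in> R" "{x, y} \<in> R" for x y
      using that by blast
    define B where "B = {x \<in> A. {a, x} \<notin> R}"
    define C where "C = {x \<in> A. {a, x} \<in> R}"
    have "crossing B C R"
      unfolding B_def C_def
    proof (rule triangle_free_crossing[OF R ab(2) _ no_triangle])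
      fix y1 y2 t assume "{y1, y2} \<in> R" "t \<in> A" "t \<notin> {y1, y2}"
      then show "{t, y1} \<in> R \<or> {t, y2} \<in> R"
        using range_attach[OF \<open>finite V\<close> fin cons wv spo spp] unfolding R_def by blast
    qed
    moreover have "B \<union> C = A" "B \<inter> C = {}" unfolding B_def C_def by auto
    moreover have "a \<in> B" "b \<in> C" using ab R unfolding B_def C_def by auto
    ultimately have "reducible V A F"
      using crossing_range_reducible[OF \<open>finite V\<close> fin cons spo spp, of B C] unfolding R_def by blast
    then show False using irr unfolding irreducible_def by blast
  qed
  then show thesis using that unfolding R_def by blast
qed

lemma alpha_top_pair_below:
  assumes L: "linear_order_on A L" and pq: "p \<in> A" "q \<in> A" "p \<noteq> q" and Z: "Z \<in> S2 A"
    and top: "\<And>z. z \<in> A \<Longrightarrow> (p, z) \<in> L"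
    and second: "\<And>z. p \<in> Z \<Longrightarrow> z \<in> Z \<Longrightarrow> z \<noteq> p \<Longrightarrow> (q, z) \<in> L"
  shows "({p, q}, Z) \<in> alpha A L"
proof -
  have "best L {p, q} = p" "worst L {p, q} = q"
    using best_worst_doubleton[OF L] pq top by auto
  moreover obtain u v where "Z = {u, v}" "u \<noteq> v" "u \<in> A" "best L Z = u" "worst L Z = v"
    using S2_obtain_oriented[OF L Z] by metis
  ultimately show ?thesis
    using Z pq top second by (auto simp: alpha_iff)
qed

lemma ranks_second_common_point:
  assumes fin: "finite A" and R: "R \<subseteq> S2 A" and X: "{p, q} \<in> R" and Y: "{p, s} \<in> R" and "q \<noteq> s"
  shows "\<exists>M\<in>{alpha A L \<inter> (R \<times> R) | L. linear_order_on A L}. ranks_second R M {p, q} {p, s}"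
proof -
  have pqs: "p \<noteq> q" "p \<noteq> s" "p \<in> A" "q \<in> A" "s \<in> A" using X Y R by auto
  obtain r :: "'a \<Rightarrow> nat" where r: "inj_on r A" "r p = 0" "r q = 1" "r s = 2"
    using rank_with_prefix[OF fin pqs(1,2) \<open>q \<noteq> s\<close>] by blast
  define L where "L = rank_order r A"
  have L: "linear_order_on A L" unfolding L_def using r(1) by (rule linear_order_on_rank_order)
  have above_p: "z = p \<or> r z \<ge> 1" if "z \<in> A" for z
    using inj_onD[OF r(1), of z p] that pqs r(2) by fastforce
  have above_pq: "z = p \<or> z = q \<or> r z \<ge> 2" if "z \<in> A" for z
    using inj_onD[OF r(1), of z p] inj_onD[OF r(1), of z q] that pqs r(2,3) by fastforce
  have top: "(p, z) \<in> L" if "z \<in> A" for z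
    unfolding L_def using that pqs r by simp
  have below_q: "(q, z) \<in> L" if "z \<in> A" "z \<noteq> p" for z
    unfolding L_def using that above_p pqs r by auto
  have below_s: "(s, z) \<in> L" if "z \<in> A" "z \<noteq> p" "z \<noteq> q" for z
    unfolding L_def using that above_pq pqs r by auto
  have first: "ranks_first R (alpha A L \<inter> (R \<times> R)) {p, q}"
    unfolding ranks_first_def
  proof (intro conjI ballI IntI)
    fix Z assume "Z \<in> R"
    with R have Z: "Z \<in> S2 A" and "Z \<subseteq> A" by (auto simp: S2_def)
    show "({p, q}, Z) \<in> alpha A L"
      using alpha_top_pair_below[OF L pqs(3,4,1) Z top] below_q \<open>Z \<subseteq> A\<close> by blast
  qed (use X in auto)
  have "ranks_second R (alpha A L \<inter> (R \<times> R)) {p, q} {p, s}"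
    unfolding ranks_second_def
  proof (intro conjI ballI IntI first)
    fix Z assume "Z \<in> R - {{p, q}}"
    with R have Z: "Z \<in> S2 A" "Z \<subseteq> A" "Z \<noteq> {p, q}" by (auto simp: S2_def)
    have "z \<noteq> q" if "p \<in> Z" "z \<in> Z" "z \<noteq> p" for z
      using that Z(3) S2_obtain[OF Z(1)] by (metis insert_commute insertE singletonD)
    then show "({p, s}, Z) \<in> alpha A L"
      using alpha_top_pair_below[OF L pqs(3,5,2) Z(1) top] below_s Z(2) by blast
  qed (use X Y \<open>q \<noteq> s\<close> in \<open>auto simp: doubleton_eq_iff\<close>)
  then show ?thesis using L by blast
qed

lemma connected_in_common_point:
  assumes "finite A" "R \<subseteq> S2 A" "X \<in> R" "Y \<in> R" "X \<noteq> Y" "p \<in> X" "p \<in> Y"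
  shows "connected_in R {alpha A L \<inter> (R \<times> R) | L. linear_order_on A L} X Y"
proof -
  obtain q s where "X = {p, q}" "Y = {p, s}"
    using assms(2-4,6,7) by (blast elim!: S2_obtain)
  with assms show ?thesis
    unfolding connected_in_def using ranks_second_common_point[OF assms(1,2)] by auto
qed

definition linking_list :: "'b set \<Rightarrow> 'b rel set \<Rightarrow> 'b list \<Rightarrow> bool" where
  "linking_list R D xs \<longleftrightarrow> distinct xs \<and>
     (2 \<le> length xs \<longrightarrow> connected_in R D (xs ! 0) (xs ! 1)) \<and>
     (\<forall>j. 2 \<le> j \<and> j < length xs \<longrightarrow> 2 \<le> card {k. k < j \<and> connected_in R D (xs ! j) (xs ! k)})"

lemma linked_iff_linking_list: "linked R D \<longleftrightarrow> (\<exists>xs. set xs = R \<and> linking_list R D xs)"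
  unfolding linked_def linking_list_def by blast

lemma two_le_card_indices:
  assumes "x \<in> set (take j xs)" "y \<in> set (take j xs)" "x \<noteq> y" "Q x" "Q y"
  shows "2 \<le> card {k. k < j \<and> Q (xs ! k)}"
proof -
  obtain k1 k2 where "k1 < j" "xs ! k1 = x" "k2 < j" "xs ! k2 = y"
    using assms(1,2) by (auto simp: in_set_conv_nth)
  then have "{k1, k2} \<subseteq> {k. k < j \<and> Q (xs ! k)}" "card {k1, k2} = 2"
    using assms(3-5) by (auto simp: card_insert_if)
  moreover have "finite {k. k < j \<and> Q (xs ! k)}" by simp
  ultimately show ?thesis by (metis card_mono)
qed

lemma linking_list_triangle:
  assumes "distinct [x, y, z]" "connected_in R D x y" "connected_in R D z x" "connected_in R D z y"
  shows "linking_list R D [x, y, z]"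
  unfolding linking_list_def
proof (intro conjI allI impI)
  fix j assume "2 \<le> j \<and> j < length [x, y, z]"
  then have "j = 2" by simp
  then show "2 \<le> card {k. k < j \<and> connected_in R D ([x, y, z] ! j) ([x, y, z] ! k)}"
    using two_le_card_indices[of x 2 "[x, y, z]" y] assms by simp
qed (use assms in auto)

lemma linking_list_append:
  assumes xs: "linking_list R D xs" "2 \<le> length xs" and dist: "distinct (xs @ ys)"
    and ys: "\<And>y. y \<in> set ys \<Longrightarrow>
      \<exists>x1\<in>set xs. \<exists>x2\<in>set xs. x1 \<noteq> x2 \<and> connected_in R D y x1 \<and> connected_in R D y x2"
  shows "linking_list R D (xs @ ys)"
  unfolding linking_list_def
proof (intro conjI allI impI)
  show "distinct (xs @ ys)" by fact
  show "connected_in R D ((xs @ ys) ! 0) ((xs @ ys) ! 1)"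
    using xs unfolding linking_list_def by (auto simp: nth_append)
  fix j assume j: "2 \<le> j \<and> j < length (xs @ ys)"
  show "2 \<le> card {k. k < j \<and> connected_in R D ((xs @ ys) ! j) ((xs @ ys) ! k)}"
  proof (cases "j < length xs")
    case True
    then have "{k. k < j \<and> connected_in R D ((xs @ ys) ! j) ((xs @ ys) ! k)} =
        {k. k < j \<and> connected_in R D (xs ! j) (xs ! k)}"
      by (auto simp: nth_append)
    then show ?thesis using xs j True unfolding linking_list_def by auto
  next
    case False
    then have "(xs @ ys) ! j \<in> set ys" using j by (auto simp: nth_append)
    then obtain x1 x2 where "x1 \<in> set xs" "x2 \<in> set xs" "x1 \<noteq> x2"
      "connected_in R D ((xs @ ys) ! j) x1" "connected_in R D ((xs @ ys) ! j) x2"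
      using ys by blast
    moreover have "set xs \<subseteq> set (take j (xs @ ys))" using False by auto
    ultimately show ?thesis
      using two_le_card_indices[of x1 j "xs @ ys" x2 "connected_in R D ((xs @ ys) ! j)"] by blast
  qed
qed

lemma linked_from_triangle:
  assumes fin: "finite A" and R: "R \<subseteq> S2 A"
    and attach: "\<And>y1 y2 t. {y1, y2} \<in> R \<Longrightarrow> t \<in> A \<Longrightarrow> t \<notin> {y1, y2} \<Longrightarrow> {t, y1} \<in> R \<or> {t, y2} \<in> R"
    and triangle: "{a, b} \<in> R" "{b, c} \<in> R" "{a, c} \<in> R"
  shows "linked R {alpha A L \<inter> (R \<times> R) | L. linear_order_on A L}"
proof -
  define D where "D = {alpha A L \<inter> (R \<times> R) | L. linear_order_on A L}"
  define T where "T = {a, b, c}"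
  define E0 where "E0 = [{a, b}, {b, c}, {a, c}]"
  have abc: "a \<noteq> b" "b \<noteq> c" "a \<noteq> c" using triangle R by auto
  have E0: "set E0 \<subseteq> R" "distinct E0" "length E0 = 3"
    using triangle abc unfolding E0_def by (auto simp: doubleton_eq_iff)
  have conn: "connected_in R D X Y" if "X \<in> R" "Y \<in> R" "X \<noteq> Y" "p \<in> X" "p \<in> Y" for X Y p
    unfolding D_def using connected_in_common_point[OF fin R that] .
  have "finite R" using finite_subset[OF R finite_S2[OF fin]] .
  then obtain l1 l2 where l1: "distinct l1" "set l1 = {e \<in> R. e \<inter> T \<noteq> {}} - set E0"
    and l2: "distinct l2" "set l2 = {e \<in> R. e \<inter> T = {}}"
    by (metis (no_types, lifting) finite_Diff finite_distinct_list mem_Collect_eq finite_subset subsetI)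
  have E0_through: "\<exists>x1\<in>set E0. \<exists>x2\<in>set E0. x1 \<noteq> x2 \<and> t \<in> x1 \<and> t \<in> x2" if "t \<in> T" for t
    using that abc unfolding T_def E0_def by (auto simp: doubleton_eq_iff)
  have "linking_list R D E0"
    unfolding E0_def
    by (rule linking_list_triangle)
      (use E0 abc triangle conn[of "{a, b}" "{b, c}" b] conn[of "{a, c}" "{a, b}" a]
        conn[of "{a, c}" "{b, c}" c] in \<open>auto simp: E0_def doubleton_eq_iff\<close>)
  then have "linking_list R D (E0 @ l1)"
  proof (rule linking_list_append)
    fix y assume "y \<in> set l1"
    then obtain t where y: "y \<in> R" "y \<notin> set E0" "t \<in> y" "t \<in> T" using l1 by auto
    with E0_through obtain x1 x2 where "x1 \<in> set E0" "x2 \<in> set E0" "x1 \<noteq> x2" "t \<in> x1" "t \<in> x2"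
      by blast
    with y E0(1) conn show "\<exists>x1\<in>set E0. \<exists>x2\<in>set E0. x1 \<noteq> x2 \<and> connected_in R D y x1 \<and> connected_in R D y x2"
      by (metis subsetD)
  qed (use E0 l1 in auto)
  then have "linking_list R D ((E0 @ l1) @ l2)"
  proof (rule linking_list_append)
    fix y assume "y \<in> set l2"
    then have y: "y \<in> R" "y \<inter> T = {}" using l2 by auto
    then obtain u v where uv: "y = {u, v}" "u \<in> A" "u \<notin> T" using R by (blast elim: S2_obtain)
    \<comment> \<open>Attaching u to each side of the triangle yields at least two pairs {u, w} with w \<in> T.\<close>
    have "{u, a} \<in> R \<or> {u, b} \<in> R" "{u, b} \<in> R \<or> {u, c} \<in> R" "{u, a} \<in> R \<or> {u, c} \<in> R"
      using attach[OF triangle(1)] attach[OF triangle(2)] attach[OF triangle(3)] uv(2,3)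
      unfolding T_def by auto
    then obtain w1 w2 where w: "w1 \<in> T" "w2 \<in> T" "w1 \<noteq> w2" "{u, w1} \<in> R" "{u, w2} \<in> R"
      using abc unfolding T_def by blast
    have near: "{u, w} \<in> set l1 \<and> connected_in R D y {u, w}" if "w \<in> T" "{u, w} \<in> R" for w
    proof
      show "{u, w} \<in> set l1" using that uv(3) l1(2) unfolding E0_def T_def by auto
      have "{u, w} \<noteq> y" using that y(2) by auto
      then show "connected_in R D y {u, w}" using conn[of y "{u, w}" u] that y(1) uv(1) by auto
    qed
    moreover have "{u, w1} \<noteq> {u, w2}" using w uv(3) by (auto simp: doubleton_eq_iff)
    ultimately show "\<exists>x1\<in>set (E0 @ l1). \<exists>x2\<in>set (E0 @ l1). x1 \<noteq> x2 \<and>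
        connected_in R D y x1 \<and> connected_in R D y x2"
      using w by (metis Un_iff set_append)
  qed (use E0 l1 l2 in \<open>auto simp: E0_def T_def\<close>)
  moreover have "set ((E0 @ l1) @ l2) = R" using E0 l1 l2 by auto
  ultimately show ?thesis unfolding D_def linked_iff_linking_list by blast
qed

theorem proposition51:
  fixes V :: "'v set" and A :: "'a set" and F :: "('v \<Rightarrow> 'a rel) \<Rightarrow> 'a set"
  assumes "finite V" and "V \<noteq> {}" and "finite A"
    and "consular_rule V A F"
    and "irreducible V A F" and "weakly_viable V A F"
    and "SPP V A F" and "SPO V A F"
  shows "(\<forall>M\<in>{alpha A L \<inter> (F ` profiles V A \<times> F ` profiles V A) | L. linear_order_on A L}.
            linear_order_on (F ` profiles V A) M)
      \<and> linked (F ` profiles V A)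
          {alpha A L \<inter> (F ` profiles V A \<times> F ` profiles V A) | L. linear_order_on A L}"
proof -
  note fin = \<open>finite V\<close> \<open>finite A\<close> and cons = \<open>consular_rule V A F\<close>
    and sp = \<open>SPO V A F\<close> \<open>SPP V A F\<close>
  have R: "F ` profiles V A \<subseteq> S2 A" using consular_rule_S2[OF cons] by blast
  obtain a x y where triangle:
    "{a, x} \<in> F ` profiles V A" "{x, y} \<in> F ` profiles V A" "{a, y} \<in> F ` profiles V A"
    using irreducible_range_has_triangle[OF fin cons assms(5,6) sp] .
  have "linked (F ` profiles V A) {alpha A L \<inter> (F ` profiles V A \<times> F ` profiles V A) | L. linear_order_on A L}"
    using linked_from_triangle[OF fin(2) R range_attach[OF fin cons assms(6) sp] triangle] .
  moreover have "linear_order_on (F ` profiles V A) (alpha A L \<inter> (F ` profiles V A \<times> F ` profiles V A))"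
    if "linear_order_on A L" for L
    using linear_order_on_alpha[OF that R] .
  ultimately show ?thesis by blast
qed

end
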